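(* Fix $n\geq 5$ and let $r>0$. Consider the $n\times n$ symmetric matrices $P=[p_{ij}]$ with $p_{ii}=x_i\geq 0$ ($1\le i\le n$), $p_{i,i+2}=p_{i+2,i}=y_i\geq 0$ ($1\le i\le n-2$), and all other entries (in particular $p_{i,i+1}=p_{i+1,i}$) equal to $0$. Then $P^{\circ r}$ is positive definite for every positive definite such $P$ if and only if $r\geq 1$; likewise, $P^{\circ r}$ is positive semidefinite for every positive semidefinite such $P$ if and only if $r\geq 1$.
   Context: For a nonnegative matrix $A=[a_{ij}]$ and $r>0$, the Hadamard power is $A^{\circ r}=[a_{ij}^r]$. Positive (semi)definite matrices are required to be symmetric. *)

theory Defs
  imports Complex_Main
begin

(* n x n real matrices are represented as functions nat => nat => real,
   only entries with indices < n matter (0-based indexing). *)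

definition sym_mat :: "nat \<Rightarrow> (nat \<Rightarrow> nat \<Rightarrow> real) \<Rightarrow> bool" where
  "sym_mat n A \<longleftrightarrow> (\<forall>i<n. \<forall>j<n. A i j = A j i)"

definition quad_form :: "nat \<Rightarrow> (nat \<Rightarrow> nat \<Rightarrow> real) \<Rightarrow> (nat \<Rightarrow> real) \<Rightarrow> real" where
  "quad_form n A v = (\<Sum>i<n. \<Sum>j<n. v i * A i j * v j)"

definition pos_def :: "nat \<Rightarrow> (nat \<Rightarrow> nat \<Rightarrow> real) \<Rightarrow> bool" where
  "pos_def n A \<longleftrightarrow> sym_mat n A \<and> (\<forall>v. (\<exists>i<n. v i \<noteq> 0) \<longrightarrow> quad_form n A v > 0)"

definition pos_semidef :: "nat \<Rightarrow> (nat \<Rightarrow> nat \<Rightarrow> real) \<Rightarrow> bool" where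
  "pos_semidef n A \<longleftrightarrow> sym_mat n A \<and> (\<forall>v. quad_form n A v \<ge> 0)"

(* Hadamard power; entries are nonnegative, and 0 powr r = 0 = 0^r for r > 0 *)
definition hadamard_pow :: "(nat \<Rightarrow> nat \<Rightarrow> real) \<Rightarrow> real \<Rightarrow> (nat \<Rightarrow> nat \<Rightarrow> real)" where
  "hadamard_pow A r = (\<lambda>i j. A i j powr r)"

definition gap2_mat :: "nat \<Rightarrow> (nat \<Rightarrow> nat \<Rightarrow> real) \<Rightarrow> bool" where
  "gap2_mat n P \<longleftrightarrow>
     (\<exists>x y :: nat \<Rightarrow> real. (\<forall>i<n. x i \<ge> 0) \<and> (\<forall>i. i + 2 < n \<longrightarrow> y i \<ge> 0) \<and>
        (\<forall>i<n. \<forall>j<n. P i j =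
           (if i = j then x i else if j = i + 2 then y i else if i = j + 2 then y j else 0)))"

end

theory Submission
  imports Defs
begin

(* The even-indexed and the odd-indexed coordinates do not interact, so P is the
   direct sum of two tridiagonal matrices. Completing squares along each chain shows that P is
   positive semidefinite iff its elimination pivots c_0 = x_0, c_1 = x_1,
   c_(i+2) = x_(i+2) - y_i^2 / c_i are nonnegative (with y_i = 0 whenever c_i = 0), and positive
   definite iff they are all positive. For r >= 1, superadditivity of t^r gives
   c_k(P^(o r)) >= c_k(P)^r by induction along each chain, so both properties survive. For r < 1
   choose a with a^2 < 1/2 < a^(2r): the matrix with unit diagonal and y_0 = y_2 = a is positive
   definite, but its r-th Hadamard power is not even semidefinite; this is where n >= 5 is
   needed. *)

lemma quad_form_cong:
  "(\<And>i. i < n \<Longrightarrow> v i = w i) \<Longrightarrow> quad_form n A v = quad_form n A w"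
  unfolding quad_form_def by (intro sum.cong) auto

lemma quad_form_Suc:
  "quad_form (Suc n) A v = quad_form n A v
     + (\<Sum>i<n. v i * A i n * v n + v n * A n i * v i) + v n * A n n * v n"
  by (simp add: quad_form_def sum.distrib)

lemma quad_form_zero_tail:
  assumes "\<And>i. m \<le> i \<Longrightarrow> v i = 0" and "m \<le> n"
  shows "quad_form n A v = quad_form m A v"
  using assms(2) by (induction n rule: dec_induct) (simp_all add: quad_form_Suc assms(1))

lemma quad_form_zero: "quad_form n A (\<lambda>_. 0) = 0"
  by (simp add: quad_form_def)

lemma pos_def_imp_pos_semidef: "pos_def n A \<Longrightarrow> pos_semidef n A"
  unfolding pos_def_def pos_semidef_def
  by (metis less_imp_le order_refl quad_form_cong quad_form_zero)

lemma pos_def_cong: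
  "(\<And>i j. i < n \<Longrightarrow> j < n \<Longrightarrow> A i j = B i j) \<Longrightarrow> pos_def n A \<longleftrightarrow> pos_def n B"
  unfolding pos_def_def sym_mat_def quad_form_def by simp

lemma pos_semidef_cong:
  "(\<And>i j. i < n \<Longrightarrow> j < n \<Longrightarrow> A i j = B i j) \<Longrightarrow> pos_semidef n A \<longleftrightarrow> pos_semidef n B"
  unfolding pos_semidef_def sym_mat_def quad_form_def by simp

definition gap2_matrix :: "(nat \<Rightarrow> real) \<Rightarrow> (nat \<Rightarrow> real) \<Rightarrow> nat \<Rightarrow> nat \<Rightarrow> real" where
  "gap2_matrix x y i j =
     (if i = j then x i else if j = i + 2 then y i else if i = j + 2 then y j else 0)"

lemma sym_mat_gap2_matrix: "sym_mat n (gap2_matrix x y)"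
  by (auto simp: sym_mat_def gap2_matrix_def)

lemma gap2_matE:
  assumes "gap2_mat n P"
  obtains x y where "\<And>i. i < n \<Longrightarrow> x i \<ge> 0" "\<And>i. i + 2 < n \<Longrightarrow> y i \<ge> 0"
    "\<And>i j. i < n \<Longrightarrow> j < n \<Longrightarrow> P i j = gap2_matrix x y i j"
  using assms unfolding gap2_mat_def gap2_matrix_def by blast

lemma hadamard_pow_gap2_matrix:
  "hadamard_pow (gap2_matrix x y) r = gap2_matrix (\<lambda>i. x i powr r) (\<lambda>i. y i powr r)"
  by (auto simp: fun_eq_iff hadamard_pow_def gap2_matrix_def)

lemma quad_form_gap2_matrix_Suc:
  "quad_form (Suc n) (gap2_matrix x y) v = quad_form n (gap2_matrix x y) v + x n * (v n)^2
     + (if n \<ge> 2 then 2 * y (n - 2) * v (n - 2) * v n else 0)"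
proof -
  have "(\<Sum>i<n. v i * gap2_matrix x y i n * v n + v n * gap2_matrix x y n i * v i)
      = (\<Sum>i<n. if i = n - 2 \<and> n \<ge> 2 then 2 * y i * v i * v n else 0)"
    by (intro sum.cong) (auto simp: gap2_matrix_def)
  then show ?thesis
    by (simp add: quad_form_Suc gap2_matrix_def power2_eq_square)
qed

(* When a pivot c_i vanishes, HOL's y/0 = 0 makes the next pivot x_(i+2); this is harmless,
   since in the semidefinite case c_i = 0 forces y_i = 0. *)
fun gap2_pivot :: "(nat \<Rightarrow> real) \<Rightarrow> (nat \<Rightarrow> real) \<Rightarrow> nat \<Rightarrow> real" where
  "gap2_pivot x y 0 = x 0"
| "gap2_pivot x y (Suc 0) = x 1"
| "gap2_pivot x y (Suc (Suc i)) = x (Suc (Suc i)) - (y i)^2 / gap2_pivot x y i"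

(* The completed square c_i (v_i + y_i / c_i * v_(i+2))^2, expanded so that it is meaningful
   also for c_i = 0; the last two coordinates carry no coupling term. *)
definition pivot_square :: "(nat \<Rightarrow> real) \<Rightarrow> (nat \<Rightarrow> real) \<Rightarrow> nat \<Rightarrow> (nat \<Rightarrow> real) \<Rightarrow> nat \<Rightarrow> real" where
  "pivot_square x y n v i =
     (if i + 2 < n
      then gap2_pivot x y i * (v i)^2 + 2 * y i * v i * v (i + 2)
           + (y i)^2 / gap2_pivot x y i * (v (i + 2))^2
      else gap2_pivot x y i * (v i)^2)"

lemma quad_form_gap2_matrix_eq_sum_pivot_square:
  "quad_form n (gap2_matrix x y) v = (\<Sum>i<n. pivot_square x y n v i)"
proof (induction n)
  case 0
  then show ?case by (simp add: quad_form_def)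
next
  case (Suc n)
  show ?case
  proof (cases "n \<ge> 2")
    case False
    then have "(\<Sum>i<n. pivot_square x y (Suc n) v i) = (\<Sum>i<n. pivot_square x y n v i)"
      by (intro sum.cong) (auto simp: pivot_square_def)
    moreover have "gap2_pivot x y n = x n"
      using False by (auto dest: less_2_cases simp: not_le)
    ultimately show ?thesis
      using False Suc.IH by (simp add: quad_form_gap2_matrix_Suc pivot_square_def power2_eq_square)
  next
    case True
    then obtain k where n: "n = Suc (Suc k)" by (metis add_2_eq_Suc le_Suc_ex)
    have "(\<Sum>i<k. pivot_square x y (Suc n) v i) = (\<Sum>i<k. pivot_square x y n v i)"
      by (intro sum.cong) (auto simp: pivot_square_def n)
    moreover have "gap2_pivot x y k * (v k)^2 + 2 * y k * v k * v n
        + (y k)^2 / gap2_pivot x y k * (v n)^2 + gap2_pivot x y n * (v n)^2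
      = gap2_pivot x y k * (v k)^2 + x n * (v n)^2 + 2 * y k * v k * v n"
      by (simp add: n algebra_simps)
    ultimately show ?thesis
      using Suc.IH by (simp add: quad_form_gap2_matrix_Suc pivot_square_def n)
  qed
qed

lemma pivot_square_completed:
  "gap2_pivot x y i \<noteq> 0 \<Longrightarrow> i + 2 < n \<Longrightarrow>
    pivot_square x y n v i = gap2_pivot x y i * (v i + y i / gap2_pivot x y i * v (i + 2))^2"
  by (simp add: pivot_square_def field_simps power2_eq_square)

definition psd_pivots :: "nat \<Rightarrow> (nat \<Rightarrow> real) \<Rightarrow> (nat \<Rightarrow> real) \<Rightarrow> bool" where
  "psd_pivots n x y \<longleftrightarrow>
     (\<forall>k<n. gap2_pivot x y k \<ge> 0 \<and> (k + 2 < n \<longrightarrow> gap2_pivot x y k = 0 \<longrightarrow> y k = 0))"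

definition pd_pivots :: "nat \<Rightarrow> (nat \<Rightarrow> real) \<Rightarrow> (nat \<Rightarrow> real) \<Rightarrow> bool" where
  "pd_pivots n x y \<longleftrightarrow> (\<forall>k<n. gap2_pivot x y k > 0)"

lemma pd_pivots_imp_psd_pivots: "pd_pivots n x y \<Longrightarrow> psd_pivots n x y"
  unfolding pd_pivots_def psd_pivots_def by force

lemma pivot_square_nonneg:
  assumes "psd_pivots n x y" and "i < n"
  shows "pivot_square x y n v i \<ge> 0"
proof (cases "gap2_pivot x y i = 0 \<or> \<not> i + 2 < n")
  case True
  with assms show ?thesis by (auto simp: pivot_square_def psd_pivots_def)
next
  case False
  with assms have "gap2_pivot x y i > 0" by (simp add: psd_pivots_def order_less_le)
  with False show ?thesis by (simp add: pivot_square_completed)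
qed

lemma quad_form_gap2_matrix_nonneg:
  "psd_pivots n x y \<Longrightarrow> quad_form n (gap2_matrix x y) v \<ge> 0"
  unfolding quad_form_gap2_matrix_eq_sum_pivot_square
  by (intro sum_nonneg pivot_square_nonneg) auto

lemma quad_form_gap2_matrix_pos:
  assumes pd: "pd_pivots n x y" and nonzero: "\<exists>i<n. v i \<noteq> 0"
  shows "quad_form n (gap2_matrix x y) v > 0"
proof -
  define S where "S = {i. i < n \<and> v i \<noteq> 0}"
  have S: "finite S" "S \<noteq> {}" using nonzero by (auto simp: S_def)
  define j where "j = Max S"
  have j: "j < n" "v j \<noteq> 0" using Max_in[OF S] by (auto simp: S_def j_def)
  have "v (j + 2) = 0" if "j + 2 < n"
  proof (rule ccontr)
    assume "v (j + 2) \<noteq> 0"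
    with that have "j + 2 \<in> S" by (simp add: S_def)
    then show False using Max_ge[OF S(1)] by (fastforce simp: j_def)
  qed
  then have "pivot_square x y n v j = gap2_pivot x y j * (v j)^2"
    by (simp add: pivot_square_def)
  also have "\<dots> > 0" using pd j by (simp add: pd_pivots_def)
  finally show ?thesis
    unfolding quad_form_gap2_matrix_eq_sum_pivot_square
    using j(1) pivot_square_nonneg[OF pd_pivots_imp_psd_pivots[OF pd]]
    by (intro sum_pos2[of _ j]) auto
qed

(* Back substitution: v_k = 1, v_j = 0 for j > k, and v_j for j < k chosen to make the j-th
   completed square vanish, so that the quadratic form of v is the k-th pivot. *)
function pivot_witness :: "(nat \<Rightarrow> real) \<Rightarrow> (nat \<Rightarrow> real) \<Rightarrow> nat \<Rightarrow> nat \<Rightarrow> real" where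
  "pivot_witness x y k j =
     (if j = k then 1
      else if j + 2 \<le> k then - (y j / gap2_pivot x y j) * pivot_witness x y k (j + 2)
      else 0)"
  by auto
termination by (relation "measure (\<lambda>(x, y, k, j). k - j)") auto

declare pivot_witness.simps [simp del]

lemma pivot_witness_self [simp]: "pivot_witness x y k k = 1"
  by (subst pivot_witness.simps) simp

lemma pivot_witness_eq_0: "k < j \<or> j + 1 = k \<Longrightarrow> pivot_witness x y k j = 0"
  by (subst pivot_witness.simps) auto

lemma pivot_witness_step:
  "j + 2 \<le> k \<Longrightarrow> pivot_witness x y k j = - (y j / gap2_pivot x y j) * pivot_witness x y k (j + 2)"
  by (subst pivot_witness.simps) simp

lemma quad_form_gap2_matrix_pivot_witness:
  assumes degenerate: "\<And>i. i + 2 \<le> k \<Longrightarrow> gap2_pivot x y i = 0 \<Longrightarrow> y i = 0" and "k < n"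
  shows "quad_form n (gap2_matrix x y) (pivot_witness x y k) = gap2_pivot x y k"
proof -
  have "pivot_square x y n (pivot_witness x y k) i = (if i = k then gap2_pivot x y k else 0)" for i
  proof (cases "i + 2 \<le> k")
    case True
    show ?thesis
    proof (cases "gap2_pivot x y i = 0")
      case True
      with degenerate \<open>i + 2 \<le> k\<close> show ?thesis
        by (simp add: pivot_square_def pivot_witness_step)
    next
      case False
      with \<open>i + 2 \<le> k\<close> \<open>k < n\<close> show ?thesis
        by (simp add: pivot_square_completed pivot_witness_step[of i k])
    qed
  next
    case False
    then have "i = k \<or> k < i \<or> i + 1 = k" by linarith
    then show ?thesis by (auto simp: pivot_square_def pivot_witness_eq_0)
  qed
  with \<open>k < n\<close> show ?thesis by (simp add: quad_form_gap2_matrix_eq_sum_pivot_square)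
qed

lemma linear_coeff_eq_0_if_quadratic_nonneg:
  fixes a b :: real
  assumes "\<And>t. 0 \<le> a * t^2 - 2 * b * t"
  shows "b = 0"
proof (rule ccontr)
  assume "b \<noteq> 0"
  define s where "s = \<bar>a\<bar> + 1"
  have "s > 0" "a / s - 2 < 0" by (auto simp: s_def divide_less_eq)
  moreover have "b^2 / s > 0" using \<open>s > 0\<close> \<open>b \<noteq> 0\<close> by simp
  ultimately have "b^2 / s * (a / s - 2) < 0" by (intro mult_pos_neg)
  moreover have "a * (b / s)^2 - 2 * b * (b / s) = b^2 / s * (a / s - 2)"
    using \<open>s > 0\<close> by (simp add: field_simps power2_eq_square)
  ultimately have "a * (b / s)^2 - 2 * b * (b / s) < 0" by simp
  with assms show False by (meson not_le)
qed

lemma coupling_eq_0_if_pivot_eq_0: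
  assumes psd: "pos_semidef n (gap2_matrix x y)"
    and degenerate: "\<And>i. i + 2 \<le> k \<Longrightarrow> gap2_pivot x y i = 0 \<Longrightarrow> y i = 0"
    and "k + 2 < n" and singular: "gap2_pivot x y k = 0"
  shows "y k = 0"
proof -
  have "0 \<le> x (k + 2) * t^2 - 2 * y k * t" for t
  proof -
    define w where "w = (pivot_witness x y k)(k + 2 := - t)"
    have "0 \<le> quad_form n (gap2_matrix x y) w" using psd by (simp add: pos_semidef_def)
    also have "\<dots> = quad_form (k + 3) (gap2_matrix x y) w"
      using \<open>k + 2 < n\<close> by (intro quad_form_zero_tail) (auto simp: w_def pivot_witness_eq_0)
    also have "\<dots> = quad_form (k + 2) (gap2_matrix x y) w + x (k + 2) * t^2 - 2 * y k * t"
      by (simp add: numeral_3_eq_3 quad_form_gap2_matrix_Suc w_def)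
    also have "quad_form (k + 2) (gap2_matrix x y) w
        = quad_form (k + 2) (gap2_matrix x y) (pivot_witness x y k)"
      by (intro quad_form_cong) (simp add: w_def)
    also have "\<dots> = 0"
      using quad_form_gap2_matrix_pivot_witness[OF degenerate] singular by simp
    finally show ?thesis by simp
  qed
  then show ?thesis by (rule linear_coeff_eq_0_if_quadratic_nonneg)
qed

lemma psd_pivots_if_pos_semidef:
  assumes psd: "pos_semidef n (gap2_matrix x y)"
  shows "psd_pivots n x y"
proof -
  have "gap2_pivot x y k \<ge> 0 \<and> (k + 2 < n \<longrightarrow> gap2_pivot x y k = 0 \<longrightarrow> y k = 0)"
    if "k < n" for k
    using that
  proof (induction k rule: less_induct)
    case (less k)
    have degenerate: "y i = 0" if "i + 2 \<le> k" and "gap2_pivot x y i = 0" for i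
      using less.IH[of i] less.prems that by simp
    have "gap2_pivot x y k = quad_form n (gap2_matrix x y) (pivot_witness x y k)"
      using quad_form_gap2_matrix_pivot_witness[OF degenerate less.prems] by simp
    also have "\<dots> \<ge> 0" using psd by (simp add: pos_semidef_def)
    finally show ?case
      using coupling_eq_0_if_pivot_eq_0[OF psd degenerate] by blast
  qed
  then show ?thesis by (simp add: psd_pivots_def)
qed

lemma pd_pivots_if_pos_def:
  assumes pd: "pos_def n (gap2_matrix x y)"
  shows "pd_pivots n x y"
  unfolding pd_pivots_def
proof (intro allI impI)
  fix k assume "k < n"
  have "psd_pivots n x y"
    using pd by (intro psd_pivots_if_pos_semidef pos_def_imp_pos_semidef)
  with \<open>k < n\<close> have "gap2_pivot x y k = quad_form n (gap2_matrix x y) (pivot_witness x y k)"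
    by (intro quad_form_gap2_matrix_pivot_witness[symmetric]) (auto simp: psd_pivots_def)
  also have "\<dots> > 0"
    using pd \<open>k < n\<close> unfolding pos_def_def by (metis pivot_witness_self zero_neq_one)
  finally show "gap2_pivot x y k > 0" .
qed

lemma pos_semidef_gap2_matrix_iff: "pos_semidef n (gap2_matrix x y) \<longleftrightarrow> psd_pivots n x y"
proof
  assume "psd_pivots n x y"
  then show "pos_semidef n (gap2_matrix x y)"
    by (simp add: pos_semidef_def sym_mat_gap2_matrix quad_form_gap2_matrix_nonneg)
qed (rule psd_pivots_if_pos_semidef)

lemma pos_def_gap2_matrix_iff: "pos_def n (gap2_matrix x y) \<longleftrightarrow> pd_pivots n x y"
proof
  assume "pd_pivots n x y"
  then show "pos_def n (gap2_matrix x y)"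
    by (simp add: pos_def_def sym_mat_gap2_matrix quad_form_gap2_matrix_pos)
qed (rule pd_pivots_if_pos_def)

lemma powr_superadditive:
  fixes a b r :: real
  assumes "a \<ge> 0" and "b \<ge> 0" and "r \<ge> 1"
  shows "a powr r + b powr r \<le> (a + b) powr r"
proof (cases "a + b = 0")
  case True
  with assms have "a = 0" "b = 0" by auto
  then show ?thesis by simp
next
  case False
  define s where "s = a + b"
  have "s > 0" using False assms by (simp add: s_def)
  have bound: "t powr r \<le> s powr (r - 1) * t" if "0 \<le> t" "t \<le> s" for t
  proof (cases "t = 0")
    case False
    then have "t powr r = t powr (r - 1) * t" using that by (simp add: powr_diff)
    also have "\<dots> \<le> s powr (r - 1) * t"
      using that assms by (intro mult_right_mono powr_mono2) auto
    finally show ?thesis .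
  qed simp
  have "a powr r + b powr r \<le> s powr (r - 1) * a + s powr (r - 1) * b"
    using bound[of a] bound[of b] assms by (simp add: add_mono s_def)
  also have "\<dots> = s powr (r - 1) * s" by (simp add: s_def distrib_left)
  also have "\<dots> = s powr r" using \<open>s > 0\<close> by (simp add: powr_diff)
  finally show ?thesis by (simp add: s_def)
qed

lemma gap2_pivot_powr_ge:
  fixes r :: real
  assumes "r \<ge> 1" and psd: "psd_pivots n x y"
    and x_nonneg: "\<And>i. i < n \<Longrightarrow> x i \<ge> 0" and y_nonneg: "\<And>i. i + 2 < n \<Longrightarrow> y i \<ge> 0"
    and "k < n"
  shows "gap2_pivot x y k powr r \<le> gap2_pivot (\<lambda>i. x i powr r) (\<lambda>i. y i powr r) k"
  using \<open>k < n\<close>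
proof (induction k rule: less_induct)
  case (less k)
  show ?case
  proof (cases "k \<ge> 2")
    case False
    then show ?thesis by (auto dest: less_2_cases simp: not_le)
  next
    case True
    then obtain i where k: "k = i + 2" by (metis add.commute le_Suc_ex)
    let ?c = "gap2_pivot x y" and ?c' = "gap2_pivot (\<lambda>i. x i powr r) (\<lambda>i. y i powr r)"
    have IH: "?c i powr r \<le> ?c' i" using less k by simp
    have "?c i \<ge> 0" "?c k \<ge> 0"
      using psd less.prems k by (auto simp: psd_pivots_def simp del: gap2_pivot.simps)
    show ?thesis
    proof (cases "?c i = 0")
      case True
      then have "y i = 0" using psd less.prems k by (simp add: psd_pivots_def)
      with True k show ?thesis by simp
    next
      case False
      with \<open>?c i \<ge> 0\<close> have "?c i powr r > 0" by simp
      with IH have "?c' i > 0" by linarith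
      define \<beta> where "\<beta> = (y i)^2 / ?c i"
      have "\<beta> \<ge> 0" using \<open>?c i \<ge> 0\<close> by (simp add: \<beta>_def)
      have "(y i powr r)^2 / ?c' i \<le> (y i powr r)^2 / ?c i powr r"
        using IH \<open>?c i powr r > 0\<close> \<open>?c' i > 0\<close> by (intro divide_left_mono mult_pos_pos) auto
      also have "\<dots> = \<beta> powr r"
        using y_nonneg less.prems k
        by (simp add: \<beta>_def powr_divide powr_mult power2_eq_square)
      finally have "x k powr r - \<beta> powr r \<le> ?c' k" using k by simp
      moreover have "?c k powr r + \<beta> powr r \<le> x k powr r"
        using powr_superadditive[OF \<open>?c k \<ge> 0\<close> \<open>\<beta> \<ge> 0\<close> \<open>r \<ge> 1\<close>] by (simp add: k \<beta>_def)
      ultimately show ?thesis by linarith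
    qed
  qed
qed

lemma psd_pivots_powr:
  fixes r :: real
  assumes "r \<ge> 1" and psd: "psd_pivots n x y"
    and "\<And>i. i < n \<Longrightarrow> x i \<ge> 0" and "\<And>i. i + 2 < n \<Longrightarrow> y i \<ge> 0"
  shows "psd_pivots n (\<lambda>i. x i powr r) (\<lambda>i. y i powr r)"
  unfolding psd_pivots_def
proof (intro allI impI conjI)
  fix k assume "k < n"
  have ge: "gap2_pivot x y k powr r \<le> gap2_pivot (\<lambda>i. x i powr r) (\<lambda>i. y i powr r) k"
    using gap2_pivot_powr_ge[OF assms \<open>k < n\<close>] .
  then show "gap2_pivot (\<lambda>i. x i powr r) (\<lambda>i. y i powr r) k \<ge> 0"
    by (meson order_trans powr_ge_zero)
  assume "k + 2 < n" and "gap2_pivot (\<lambda>i. x i powr r) (\<lambda>i. y i powr r) k = 0"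
  with ge have "gap2_pivot x y k = 0" by (metis powr_gt_zero not_le)
  with psd \<open>k + 2 < n\<close> show "y k powr r = 0" by (simp add: psd_pivots_def)
qed

lemma pd_pivots_powr:
  fixes r :: real
  assumes "r \<ge> 1" and pd: "pd_pivots n x y"
    and "\<And>i. i < n \<Longrightarrow> x i \<ge> 0" and "\<And>i. i + 2 < n \<Longrightarrow> y i \<ge> 0"
  shows "pd_pivots n (\<lambda>i. x i powr r) (\<lambda>i. y i powr r)"
  unfolding pd_pivots_def
proof (intro allI impI)
  fix k assume "k < n"
  with pd have "0 < gap2_pivot x y k" by (simp add: pd_pivots_def)
  then have "0 < gap2_pivot x y k powr r" by simp
  also have "\<dots> \<le> gap2_pivot (\<lambda>i. x i powr r) (\<lambda>i. y i powr r) k"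
    using assms pd_pivots_imp_psd_pivots \<open>k < n\<close> by (intro gap2_pivot_powr_ge)
  finally show "gap2_pivot (\<lambda>i. x i powr r) (\<lambda>i. y i powr r) k > 0" .
qed

lemma gap2_mat_gap2_matrix:
  "(\<And>i. i < n \<Longrightarrow> x i \<ge> 0) \<Longrightarrow> (\<And>i. i + 2 < n \<Longrightarrow> y i \<ge> 0) \<Longrightarrow> gap2_mat n (gap2_matrix x y)"
  unfolding gap2_mat_def gap2_matrix_def by blast

lemma hadamard_pow_gap2_mat_preserves:
  fixes r :: real
  assumes "r \<ge> 1" and "gap2_mat n P"
  shows "pos_semidef n P \<Longrightarrow> pos_semidef n (hadamard_pow P r)"
    and "pos_def n P \<Longrightarrow> pos_def n (hadamard_pow P r)"
proof -
  obtain x y where x: "\<And>i. i < n \<Longrightarrow> x i \<ge> 0" and y: "\<And>i. i + 2 < n \<Longrightarrow> y i \<ge> 0"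
    and P: "\<And>i j. i < n \<Longrightarrow> j < n \<Longrightarrow> P i j = gap2_matrix x y i j"
    using gap2_matE[OF \<open>gap2_mat n P\<close>] by blast
  have P_r: "hadamard_pow P r i j = gap2_matrix (\<lambda>i. x i powr r) (\<lambda>i. y i powr r) i j"
    if "i < n" "j < n" for i j
    using P[OF that] by (simp add: hadamard_pow_def flip: hadamard_pow_gap2_matrix)
  show "pos_semidef n P \<Longrightarrow> pos_semidef n (hadamard_pow P r)"
    using pos_semidef_cong[OF P] pos_semidef_cong[OF P_r] psd_pivots_powr[OF \<open>r \<ge> 1\<close> _ x y]
    by (simp add: pos_semidef_gap2_matrix_iff)
  show "pos_def n P \<Longrightarrow> pos_def n (hadamard_pow P r)"
    using pos_def_cong[OF P] pos_def_cong[OF P_r] pd_pivots_powr[OF \<open>r \<ge> 1\<close> _ x y]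
    by (simp add: pos_def_gap2_matrix_iff)
qed

(* On the coordinates 0, 2, 4 this is the path matrix [[1,a,0],[a,1,a],[0,a,1]], definite iff
   2 a^2 < 1; all other coordinates are decoupled with unit diagonal. *)
definition gap2_path_matrix :: "real \<Rightarrow> nat \<Rightarrow> nat \<Rightarrow> real" where
  "gap2_path_matrix a = gap2_matrix (\<lambda>_. 1) (\<lambda>i. if i = 0 \<or> i = 2 then a else 0)"

lemma gap2_pivot_path:
  "gap2_pivot (\<lambda>_. 1) (\<lambda>i. if i = 0 \<or> i = 2 then a else 0) k =
     (if k = 2 then 1 - a^2 else if k = 4 then 1 - a^2 / (1 - a^2) else 1)"
proof (cases "k < 5")
  case True
  then have "k = 0 \<or> k = 1 \<or> k = 2 \<or> k = 3 \<or> k = 4" by auto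
  then show ?thesis by (auto simp: eval_nat_numeral)
next
  case False
  define i where "i = k - 2"
  have "k = Suc (Suc i)" "i \<ge> 3" using False by (auto simp: i_def)
  then show ?thesis by simp
qed

lemma pos_def_gap2_path_matrix: "2 * a^2 < 1 \<Longrightarrow> pos_def n (gap2_path_matrix a)"
  by (simp add: gap2_path_matrix_def pos_def_gap2_matrix_iff pd_pivots_def gap2_pivot_path field_simps)

lemma not_pos_semidef_gap2_path_matrix:
  assumes "n \<ge> 5" and "1 < 2 * a^2"
  shows "\<not> pos_semidef n (gap2_path_matrix a)"
proof
  assume "pos_semidef n (gap2_path_matrix a)"
  then have psd: "psd_pivots n (\<lambda>_. 1) (\<lambda>i. if i = 0 \<or> i = 2 then a else 0)"
    by (simp add: gap2_path_matrix_def pos_semidef_gap2_matrix_iff)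
  have "a \<noteq> 0" using assms(2) by auto
  have pivot_2: "0 \<le> 1 - a^2 \<and> (1 - a^2 = 0 \<longrightarrow> a = 0)"
    and pivot_4: "0 \<le> 1 - a^2 / (1 - a^2)"
    using psd[unfolded psd_pivots_def gap2_pivot_path, rule_format, of 2]
      psd[unfolded psd_pivots_def gap2_pivot_path, rule_format, of 4] \<open>n \<ge> 5\<close>
    by simp_all
  with \<open>a \<noteq> 0\<close> have "0 < 1 - a^2" by auto
  with pivot_4 show False using assms(2) by (simp add: field_simps)
qed

lemma hadamard_pow_gap2_path_matrix:
  "hadamard_pow (gap2_path_matrix a) r = gap2_path_matrix (a powr r)"
  unfolding gap2_path_matrix_def hadamard_pow_gap2_matrix
  by (rule arg_cong2[where f = gap2_matrix]) auto

lemma exists_powr_crosses_half: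
  fixes r :: real
  assumes "0 < r" and "r < 1"
  shows "\<exists>a \<ge> 0. 2 * a^2 < 1 \<and> 1 < 2 * (a powr r)^2"
proof -
  have double_square: "2 * (2 powr t)^2 = 2 powr (1 + 2 * t)" for t :: real
  proof -
    have "2 powr (1 + 2 * t) = 2 powr 1 * (2 powr t * 2 powr t)"
      by (simp only: mult_2 powr_add)
    then show ?thesis by (simp add: power2_eq_square)
  qed
  define e where "e = - (1 + r) / (4 * r)"
  have "1 + 2 * e < 0" "0 < 1 + 2 * (e * r)"
    using assms by (simp_all add: e_def field_simps)
  have "2 * (2 powr e)^2 = 2 powr (1 + 2 * e)" by (rule double_square)
  also have "\<dots> < 2 powr 0" using \<open>1 + 2 * e < 0\<close> by (intro powr_less_mono) auto
  also have "(2::real) powr 0 = 1" by simp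
  finally have small: "2 * (2 powr e)^2 < 1" .
  have "(1::real) = 2 powr 0" by simp
  also have "\<dots> < 2 powr (1 + 2 * (e * r))"
    using \<open>0 < 1 + 2 * (e * r)\<close> by (intro powr_less_mono) auto
  also have "\<dots> = 2 * ((2 powr e) powr r)^2" by (simp only: powr_powr double_square)
  finally have large: "1 < 2 * ((2 powr e) powr r)^2" .
  show ?thesis using small large powr_ge_zero[of 2 e] by blast
qed

lemma exists_gap2_mat_hadamard_pow_not_pos_semidef:
  fixes r :: real
  assumes "n \<ge> 5" and "0 < r" and "r < 1"
  shows "\<exists>P. gap2_mat n P \<and> pos_def n P \<and> \<not> pos_semidef n (hadamard_pow P r)"
proof -
  obtain a where "a \<ge> 0" "2 * a^2 < 1" "1 < 2 * (a powr r)^2"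
    using exists_powr_crosses_half[OF \<open>0 < r\<close> \<open>r < 1\<close>] by blast
  have "gap2_mat n (gap2_path_matrix a)"
    unfolding gap2_path_matrix_def using \<open>a \<ge> 0\<close> by (intro gap2_mat_gap2_matrix) auto
  moreover have "pos_def n (gap2_path_matrix a)"
    using \<open>2 * a^2 < 1\<close> by (rule pos_def_gap2_path_matrix)
  moreover have "\<not> pos_semidef n (hadamard_pow (gap2_path_matrix a) r)"
    unfolding hadamard_pow_gap2_path_matrix
    using \<open>n \<ge> 5\<close> \<open>1 < 2 * (a powr r)^2\<close> by (rule not_pos_semidef_gap2_path_matrix)
  ultimately show ?thesis by blast
qed

theorem theorem1p3:
  fixes n :: nat and r :: real
  assumes "n \<ge> 5" and "r > 0"
  shows "((\<forall>P. gap2_mat n P \<and> pos_def n P \<longrightarrow> pos_def n (hadamard_pow P r)) \<longleftrightarrow> r \<ge> 1)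
       \<and> ((\<forall>P. gap2_mat n P \<and> pos_semidef n P \<longrightarrow> pos_semidef n (hadamard_pow P r)) \<longleftrightarrow> r \<ge> 1)"
proof -
  have necessary: "r \<ge> 1"
    if "\<And>P. gap2_mat n P \<Longrightarrow> pos_def n P \<Longrightarrow> pos_semidef n (hadamard_pow P r)"
    using exists_gap2_mat_hadamard_pow_not_pos_semidef[OF \<open>n \<ge> 5\<close> \<open>r > 0\<close>] that
    by (meson not_le)
  show ?thesis
    using necessary hadamard_pow_gap2_mat_preserves pos_def_imp_pos_semidef by meson
qed

end
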